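(* Let $a\ge 1$ and let $v$ be a valuation on a finite set $X$. The following are equivalent: (0) $v$ is $a$-submodular; (1) for every $x\in X$ and $S\subseteq T\subseteq X$ with $x\notin T$, $a\,v(x\mid S)\ge v(x\mid T)$; (2) for every $S,T,V\subseteq X$ with $S\subseteq T$, $a\,v(V\mid S)\ge v(V\mid T)$; (3) for every $A,B\subseteq X$, $v(A)+a\,v(B)\ge v(A\cup B)+a\,v(A\cap B)$.
   Context: A valuation on a finite set $X$ is a function $v:2^X\to\mathbb{R}_{\ge 0}$ with $v(\emptyset)=0$ and monotone under inclusion. The marginal valuation is $v(A\mid W)=v(A\cup W)-v(W)$; $v(x\mid S)$ means $v(\{x\}\mid S)$. A valuation $w$ exhibits $a$-bounded complementarities if $w(A\cup\{x\})\le w(A)+a\,w(\{x\})$ for every set $A$ and item $x$. A valuation $v$ is $a$-submodular if for every $W\subseteq X$ the marginal valuation $v(\cdot\mid W)$ exhibits $a$-bounded complementarities. *)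

theory Defs
  imports Complex_Main
begin

definition valuation :: "'a set \<Rightarrow> ('a set \<Rightarrow> real) \<Rightarrow> bool" where
  "valuation X v \<longleftrightarrow> finite X \<and> v {} = 0 \<and> (\<forall>A. A \<subseteq> X \<longrightarrow> v A \<ge> 0)
     \<and> (\<forall>A B. A \<subseteq> B \<and> B \<subseteq> X \<longrightarrow> v A \<le> v B)"

text \<open>Marginal valuation v(A | W) = v(A \<union> W) - v(W).\<close>
definition marginal :: "('a set \<Rightarrow> real) \<Rightarrow> 'a set \<Rightarrow> 'a set \<Rightarrow> real" where
  "marginal v W A = v (A \<union> W) - v W"

definition bounded_compl :: "real \<Rightarrow> 'a set \<Rightarrow> ('a set \<Rightarrow> real) \<Rightarrow> bool" where
  "bounded_compl a X w \<longleftrightarrow> (\<forall>A x. A \<subseteq> X \<and> x \<in> X \<longrightarrow> w (A \<union> {x}) \<le> w A + a * w {x})"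

definition a_submodular :: "real \<Rightarrow> 'a set \<Rightarrow> ('a set \<Rightarrow> real) \<Rightarrow> bool" where
  "a_submodular a X v \<longleftrightarrow> (\<forall>W. W \<subseteq> X \<longrightarrow> bounded_compl a X (marginal v W))"

end

theory Submission
  imports Defs
begin

text \<open>Everything rests on the chain rule v(A \<union> B | W) = v(A | W) + v(B | A \<union> W).
  With it, a-bounded complementarity of v(\<cdot> | W) says exactly that adding A to the
  conditioning set W shrinks the marginal value of a single item by at most the factor a
  (for items already in A \<union> W this is automatic, by monotonicity and a \<ge> 0).
  Adding the items of a set V one at a time and summing extends this from items to sets;
  the lattice inequality is the set version for the pair A \<inter> B \<subseteq> A, and it gives back the
  item version for the pair T, S \<union> {x}, whose intersection is S when x \<notin> T.\<close>

lemma marginal_empty [simp]: "marginal v W {} = 0"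
  by (simp add: marginal_def)

lemma marginal_Un: "marginal v W (A \<union> B) = marginal v W A + marginal v (A \<union> W) B"
  by (simp add: marginal_def Un_ac)

lemma marginal_subset_eq_0: "A \<subseteq> W \<Longrightarrow> marginal v W A = 0"
  by (simp add: marginal_def Un_absorb1)

lemma marginal_nonneg:
  assumes "mono_on (Pow X) v" "A \<subseteq> X" "W \<subseteq> X"
  shows "0 \<le> marginal v W A"
  using assms by (auto simp: marginal_def mono_on_def)

lemma valuation_mono_on: "valuation X v \<Longrightarrow> mono_on (Pow X) v"
  by (auto simp: valuation_def mono_on_def)

lemma a_submodular_iff_singleton_marginals:
  "a_submodular a X v \<longleftrightarrow>
     (\<forall>W A x. W \<subseteq> X \<and> A \<subseteq> X \<and> x \<in> X \<longrightarrow> marginal v (A \<union> W) {x} \<le> a * marginal v W {x})"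
proof -
  have chain: "marginal v W (A \<union> {x}) \<le> marginal v W A + a * marginal v W {x}
                 \<longleftrightarrow> marginal v (A \<union> W) {x} \<le> a * marginal v W {x}" for W A x
    unfolding marginal_Un by simp
  show ?thesis
    unfolding a_submodular_def bounded_compl_def chain by blast
qed

lemma marginal_Un_le_of_singleton_bound:
  assumes singleton: "\<And>W A x. W \<subseteq> X \<Longrightarrow> A \<subseteq> X \<Longrightarrow> x \<in> X \<Longrightarrow>
                        marginal v (A \<union> W) {x} \<le> a * marginal v W {x}"
    and "finite V" "V \<subseteq> X" "W \<subseteq> X" "A \<subseteq> X"
  shows "marginal v (A \<union> W) V \<le> a * marginal v W V"
  using \<open>finite V\<close> \<open>V \<subseteq> X\<close>
proof (induction V rule: finite_induct)
  case empty
  then show ?case by simp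
next
  case (insert x V)
  have "marginal v (V \<union> (A \<union> W)) {x} \<le> a * marginal v (V \<union> W) {x}"
    using singleton[of "V \<union> W" A x] insert.prems \<open>W \<subseteq> X\<close> \<open>A \<subseteq> X\<close> by (simp add: Un_ac)
  moreover have "insert x V = V \<union> {x}" by simp
  ultimately show ?case
    using insert marginal_Un[of v W V "{x}"] marginal_Un[of v "A \<union> W" V "{x}"]
    by (simp add: distrib_left)
qed

lemma a_submodular_iff_marginal_set_ratio:
  assumes "finite X"
  shows "a_submodular a X v \<longleftrightarrow>
           (\<forall>S T V. S \<subseteq> T \<and> T \<subseteq> X \<and> V \<subseteq> X \<longrightarrow> a * marginal v S V \<ge> marginal v T V)"
proof
  assume "a_submodular a X v"
  then have singleton: "\<And>W A x. W \<subseteq> X \<Longrightarrow> A \<subseteq> X \<Longrightarrow> x \<in> X \<Longrightarrow>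
                          marginal v (A \<union> W) {x} \<le> a * marginal v W {x}"
    by (simp add: a_submodular_iff_singleton_marginals)
  show "\<forall>S T V. S \<subseteq> T \<and> T \<subseteq> X \<and> V \<subseteq> X \<longrightarrow> a * marginal v S V \<ge> marginal v T V"
  proof (intro allI impI, elim conjE)
    fix S T V assume "S \<subseteq> T" "T \<subseteq> X" "V \<subseteq> X"
    moreover have "finite V" using \<open>V \<subseteq> X\<close> \<open>finite X\<close> by (rule finite_subset)
    ultimately have "marginal v (T \<union> S) V \<le> a * marginal v S V"
      by (intro marginal_Un_le_of_singleton_bound[OF singleton]) auto
    with \<open>S \<subseteq> T\<close> show "a * marginal v S V \<ge> marginal v T V"
      by (simp add: Un_absorb2)
  qed
next
  assume set: "\<forall>S T V. S \<subseteq> T \<and> T \<subseteq> X \<and> V \<subseteq> X \<longrightarrow> a * marginal v S V \<ge> marginal v T V"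
  show "a_submodular a X v"
    unfolding a_submodular_iff_singleton_marginals
  proof (intro allI impI, elim conjE)
    fix W A x assume "W \<subseteq> X" "A \<subseteq> X" "x \<in> X"
    then show "marginal v (A \<union> W) {x} \<le> a * marginal v W {x}"
      using set[rule_format, of W "A \<union> W" "{x}"] by simp
  qed
qed

lemma a_submodular_iff_marginal_item_ratio:
  assumes "mono_on (Pow X) v" "a \<ge> 0"
  shows "a_submodular a X v \<longleftrightarrow>
           (\<forall>x S T. x \<in> X \<and> S \<subseteq> T \<and> T \<subseteq> X \<and> x \<notin> T
              \<longrightarrow> a * marginal v S {x} \<ge> marginal v T {x})"
  unfolding a_submodular_iff_singleton_marginals
proof (intro iffI allI impI; elim conjE)
  fix x S T
  assume singleton: "\<forall>W A x. W \<subseteq> X \<and> A \<subseteq> X \<and> x \<in> X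
                      \<longrightarrow> marginal v (A \<union> W) {x} \<le> a * marginal v W {x}"
    and "x \<in> X" "S \<subseteq> T" "T \<subseteq> X"
  then have "marginal v (T \<union> S) {x} \<le> a * marginal v S {x}"
    using singleton[rule_format, of S T x] by blast
  with \<open>S \<subseteq> T\<close> show "a * marginal v S {x} \<ge> marginal v T {x}"
    by (simp add: Un_absorb2)
next
  fix W A x
  assume item: "\<forall>x S T. x \<in> X \<and> S \<subseteq> T \<and> T \<subseteq> X \<and> x \<notin> T
                   \<longrightarrow> a * marginal v S {x} \<ge> marginal v T {x}"
    and "W \<subseteq> X" "A \<subseteq> X" "x \<in> X"
  show "marginal v (A \<union> W) {x} \<le> a * marginal v W {x}"
  proof (cases "x \<in> A \<union> W")
    case True
    then have "marginal v (A \<union> W) {x} = 0" by (simp add: marginal_subset_eq_0)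
    moreover have "0 \<le> marginal v W {x}"
      using marginal_nonneg[OF assms(1)] \<open>W \<subseteq> X\<close> \<open>x \<in> X\<close> by simp
    ultimately show ?thesis using \<open>a \<ge> 0\<close> by simp
  next
    case False
    then show ?thesis
      using item[rule_format, of x W "A \<union> W"] \<open>W \<subseteq> X\<close> \<open>A \<subseteq> X\<close> \<open>x \<in> X\<close> by blast
  qed
qed

lemma lattice_ineq_of_marginal_set_ratio:
  assumes "\<forall>S T V. S \<subseteq> T \<and> T \<subseteq> X \<and> V \<subseteq> X \<longrightarrow> a * marginal v S V \<ge> marginal v T V"
  shows "\<forall>A B. A \<subseteq> X \<and> B \<subseteq> X \<longrightarrow> v A + a * v B \<ge> v (A \<union> B) + a * v (A \<inter> B)"
proof (intro allI impI, elim conjE)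
  fix A B assume "A \<subseteq> X" "B \<subseteq> X"
  then have "a * marginal v (A \<inter> B) B \<ge> marginal v A B"
    using assms[rule_format, of "A \<inter> B" A B] by blast
  moreover have "B \<union> (A \<inter> B) = B" "B \<union> A = A \<union> B" by auto
  ultimately have "v (A \<union> B) - v A \<le> a * (v B - v (A \<inter> B))"
    unfolding marginal_def by simp
  then show "v A + a * v B \<ge> v (A \<union> B) + a * v (A \<inter> B)"
    by (simp add: right_diff_distrib)
qed

lemma marginal_item_ratio_of_lattice_ineq:
  assumes "\<forall>A B. A \<subseteq> X \<and> B \<subseteq> X \<longrightarrow> v A + a * v B \<ge> v (A \<union> B) + a * v (A \<inter> B)"
  shows "\<forall>x S T. x \<in> X \<and> S \<subseteq> T \<and> T \<subseteq> X \<and> x \<notin> T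
           \<longrightarrow> a * marginal v S {x} \<ge> marginal v T {x}"
proof (intro allI impI, elim conjE)
  fix x S T assume "x \<in> X" "S \<subseteq> T" "T \<subseteq> X" "x \<notin> T"
  then have "T \<union> insert x S = insert x T" "T \<inter> insert x S = S" "insert x S \<subseteq> X"
    by auto
  then have "v T + a * v (insert x S) \<ge> v (insert x T) + a * v S"
    using assms[rule_format, of T "insert x S"] \<open>T \<subseteq> X\<close> by auto
  then show "a * marginal v S {x} \<ge> marginal v T {x}"
    by (simp add: marginal_def right_diff_distrib)
qed

theorem proposition5:
  fixes a :: real and X :: "'a set" and v :: "'a set \<Rightarrow> real"
  assumes "a \<ge> 1" and "valuation X v"
  shows "(a_submodular a X v
          \<longleftrightarrow> (\<forall>x S T. x \<in> X \<and> S \<subseteq> T \<and> T \<subseteq> X \<and> x \<notin> T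
                 \<longrightarrow> a * marginal v S {x} \<ge> marginal v T {x}))
       \<and> (a_submodular a X v
          \<longleftrightarrow> (\<forall>S T V. S \<subseteq> T \<and> T \<subseteq> X \<and> V \<subseteq> X
                 \<longrightarrow> a * marginal v S V \<ge> marginal v T V))
       \<and> (a_submodular a X v
          \<longleftrightarrow> (\<forall>A B. A \<subseteq> X \<and> B \<subseteq> X
                 \<longrightarrow> v A + a * v B \<ge> v (A \<union> B) + a * v (A \<inter> B)))"
  (is "(_ \<longleftrightarrow> ?item) \<and> (_ \<longleftrightarrow> ?set) \<and> (_ \<longleftrightarrow> ?lattice)")
proof -
  have "finite X" using assms(2) by (simp add: valuation_def)
  have "a \<ge> 0" using assms(1) by simp
  have item: "a_submodular a X v \<longleftrightarrow> ?item"
    using a_submodular_iff_marginal_item_ratio[OF valuation_mono_on[OF assms(2)] \<open>a \<ge> 0\<close>] .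
  have set: "a_submodular a X v \<longleftrightarrow> ?set"
    using a_submodular_iff_marginal_set_ratio[OF \<open>finite X\<close>] .
  have lattice: "a_submodular a X v \<longleftrightarrow> ?lattice"
  proof
    assume "a_submodular a X v"
    with set have ?set ..
    then show ?lattice by (rule lattice_ineq_of_marginal_set_ratio)
  next
    assume ?lattice
    then have ?item by (rule marginal_item_ratio_of_lattice_ineq)
    with item show "a_submodular a X v" ..
  qed
  show ?thesis using item set lattice by (intro conjI)
qed

end
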